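(* Let $\mathcal A=\{0,1\}$ and ${\bf u}\in\mathcal A^{\mathbb N}$. If the language of ${\bf u}$ is closed under reversal and $D({\bf u})>0$, then there exists a non-palindromic factor $q$ of ${\bf u}$ such that $0q0$, $0q1$, $1q0$ and $1q1$ are all factors of ${\bf u}$.
   Context: $\widetilde w$ is the reversal of $w$; $w$ is a palindrome if $w=\widetilde w$. The language is closed under reversal if the reversal of every factor is a factor. Palindromic defect: for a finite word $w$ of length $n$, $D(w)=n+1-$(number of distinct palindromic factors of $w$, including the empty word), and $D({\bf u})=\sup D(w)$ over factors $w$ of ${\bf u}$. *)

theory Defs
  imports Main "HOL-Library.Sublist" "HOL-Library.Extended_Real"
begin

definition factor_at :: "(nat \<Rightarrow> 'a) \<Rightarrow> nat \<Rightarrow> nat \<Rightarrow> 'a list" where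
  "factor_at u i n = map u [i..<i+n]"

definition is_factor :: "'a list \<Rightarrow> (nat \<Rightarrow> 'a) \<Rightarrow> bool" where
  "is_factor w u \<longleftrightarrow> (\<exists>i. w = factor_at u i (length w))"

definition palindrome :: "'a list \<Rightarrow> bool" where
  "palindrome w \<longleftrightarrow> rev w = w"

definition closed_under_reversal :: "(nat \<Rightarrow> 'a) \<Rightarrow> bool" where
  "closed_under_reversal u \<longleftrightarrow> (\<forall>w. is_factor w u \<longrightarrow> is_factor (rev w) u)"

definition pal_factors :: "'a list \<Rightarrow> 'a list set" where
  "pal_factors w = {p. sublist p w \<and> palindrome p}"

definition defect :: "'a list \<Rightarrow> int" where
  "defect w = int (length w) + 1 - int (card (pal_factors w))"

definition defect_inf :: "(nat \<Rightarrow> 'a) \<Rightarrow> ereal" where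
  "defect_inf u = (SUP w \<in> {w. is_factor w u}. ereal (of_int (defect w)))"

end

(* A positive defect produces a factor without unioccurrent palindromic suffix; let r be a
   shortest one. Minimality forces the longest palindromic suffix p of r to occur in r only as
   prefix and as suffix, so r is not a palindrome. Let k be the first position where r and its
   reversal differ and q = r[1..k-1]: then r begins with a q c and its reversal with a q d,
   where c and d are the two letters. If q were a palindrome, r or its reversal would begin with
   the palindrome a q a, giving an inner occurrence of p. Minimality applied to the segment of
   r starting at the last occurrence of q shows that this occurrence reads (1-a) q d. The same
   argument for the reversal of r, again a factor, gives (1-a) q c. *)

theory Submission
  imports Defs
begin

lemma palindrome_iff_nth:
  "palindrome w \<longleftrightarrow> (\<forall>i<length w. w!i = w!(length w - 1 - i))"
  unfolding palindrome_def
proof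
  assume rev: "rev w = w"
  show "\<forall>i<length w. w!i = w!(length w - 1 - i)"
  proof (intro allI impI)
    fix i assume "i < length w"
    then have "rev w ! i = w!(length w - 1 - i)" by (simp add: rev_nth)
    then show "w!i = w!(length w - 1 - i)" by (simp add: rev)
  qed
next
  assume mirror: "\<forall>i<length w. w!i = w!(length w - 1 - i)"
  show "rev w = w"
  proof (rule nth_equalityI)
    fix i assume i: "i < length (rev w)"
    then have "rev w ! i = w!(length w - 1 - (length w - 1 - i))"
      using mirror[rule_format, of "length w - 1 - i"] by (simp add: rev_nth)
    then show "rev w ! i = w ! i"
      using i by simp
  qed simp
qed

lemma sublist_at_nthI:
  assumes "j + length w \<le> length r" and "\<forall>l<length w. w!l = r!(j+l)"
  shows "sublist w r"
proof -
  have "w = take (length w) (drop j r)"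
    by (rule nth_equalityI) (use assms in auto)
  then show ?thesis
    by (metis sublist_drop sublist_order.dual_order.trans sublist_take)
qed

lemma suffix_nth: "suffix s t \<Longrightarrow> i < length s \<Longrightarrow> s!i = t!(length t - length s + i)"
  unfolding suffix_def by (auto simp: nth_append)

lemma occurrence_split:
  assumes "i + length p \<le> length r" and "\<forall>l<length p. r!(i+l) = p!l"
  shows "r = take i r @ p @ drop (i + length p) r"
proof -
  have p: "take (length p) (drop i r) = p"
    by (rule nth_equalityI) (use assms in auto)
  have "drop i r = take (length p) (drop i r) @ drop (length p) (drop i r)"
    by (rule append_take_drop_id[symmetric])
  also have "\<dots> = p @ drop (i + length p) r"
    by (simp add: p add.commute)
  finally show ?thesis
    using append_take_drop_id[of i r] by simp
qed

lemma is_factor_iff_nth: "is_factor w u \<longleftrightarrow> (\<exists>i. \<forall>l<length w. w!l = u (i+l))"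
proof
  assume "is_factor w u"
  then show "\<exists>i. \<forall>l<length w. w!l = u (i+l)"
    unfolding is_factor_def factor_at_def by (metis add_diff_cancel_left' nth_map_upt)
next
  assume "\<exists>i. \<forall>l<length w. w!l = u (i+l)"
  then obtain i where "\<forall>l<length w. w!l = u (i+l)" by blast
  then have "w = factor_at u i (length w)"
    unfolding factor_at_def by (intro nth_equalityI) auto
  then show "is_factor w u" unfolding is_factor_def by blast
qed

lemma is_factor_sublist:
  assumes "is_factor w u" and "sublist v w"
  shows "is_factor v u"
proof -
  obtain i where i: "\<forall>l<length w. w!l = u (i+l)" using assms(1) is_factor_iff_nth by blast
  obtain ps ss where w: "w = ps @ v @ ss" using assms(2) unfolding sublist_def by blast
  have "v!l = u (i + length ps + l)" if "l < length v" for l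
  proof -
    have "v!l = w!(length ps + l)" and "length ps + l < length w"
      using that w by (simp_all add: nth_append)
    then show ?thesis using i by (metis add.assoc)
  qed
  then have "\<forall>l<length v. v!l = u (i + length ps + l)" by blast
  then show ?thesis using is_factor_iff_nth by blast
qed

lemma set_factor_subset:
  assumes "is_factor w u"
  shows "set w \<subseteq> range u"
proof
  fix x assume "x \<in> set w"
  then obtain l where "l < length w" "x = w!l" by (auto simp: in_set_conv_nth)
  moreover obtain i where "\<forall>l<length w. w!l = u (i+l)" using assms is_factor_iff_nth by blast
  ultimately show "x \<in> range u" by simp
qed

definition has_unioccurrent_pal_suffix :: "'a list \<Rightarrow> bool" where
  "has_unioccurrent_pal_suffix w \<longleftrightarrow>
     (\<exists>s. palindrome s \<and> suffix s w \<and> \<not> sublist s (butlast w))"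

definition longest_pal_suffix :: "'a list \<Rightarrow> 'a list \<Rightarrow> bool" where
  "longest_pal_suffix p w \<longleftrightarrow> palindrome p \<and> suffix p w \<and>
     (\<forall>s. palindrome s \<longrightarrow> suffix s w \<longrightarrow> length s \<le> length p)"

lemma finite_pal_factors: "finite (pal_factors w)"
proof -
  have "pal_factors w \<subseteq> {xs. set xs \<subseteq> set w \<and> length xs \<le> length w}"
    unfolding pal_factors_def using set_mono_sublist sublist_length_le by blast
  then show ?thesis using finite_lists_length_le finite_subset by blast
qed

text \<open>One half of the criterion of Droubay, Justin and Pirillo: the unioccurrent palindromic
  suffixes of the nonempty prefixes are pairwise distinct.\<close>

lemma card_pal_factors_ge:
  fixes w :: "'a list"
  shows "(\<And>v. prefix v w \<Longrightarrow> v \<noteq> [] \<Longrightarrow> has_unioccurrent_pal_suffix v) \<Longrightarrow>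
    length w + 1 \<le> card (pal_factors w)"
proof (induction w rule: rev_induct)
  case Nil
  have "pal_factors ([] :: 'a list) = {[]}" unfolding pal_factors_def palindrome_def by auto
  then show ?case by simp
next
  case (snoc a w)
  then have IH: "length w + 1 \<le> card (pal_factors w)"
    by (meson prefix_append prefix_order.trans)
  obtain s where s: "palindrome s" "suffix s (w @ [a])" "\<not> sublist s w"
    using snoc.prems[of "w @ [a]"] unfolding has_unioccurrent_pal_suffix_def by auto
  have "insert s (pal_factors w) \<subseteq> pal_factors (w @ [a])"
    using s unfolding pal_factors_def
    by (auto intro: sublist_order.dual_order.trans[OF sublist_append_rightI])
  then have "card (insert s (pal_factors w)) \<le> card (pal_factors (w @ [a]))"
    using finite_pal_factors card_mono by blast
  moreover have "s \<notin> pal_factors w"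
    using s unfolding pal_factors_def by auto
  ultimately show ?case using IH finite_pal_factors[of w] by simp
qed

lemma defect_pos_imp_prefix:
  assumes "0 < defect w"
  obtains v where "prefix v w" "v \<noteq> []" "\<not> has_unioccurrent_pal_suffix v"
  using card_pal_factors_ge[of w] assms unfolding defect_def by fastforce

lemma defect_inf_pos_imp_factor:
  assumes "0 < defect_inf u"
  obtains w where "is_factor w u" "0 < defect w"
proof -
  have "\<exists>w\<in>{w. is_factor w u}. 0 < ereal (of_int (defect w))"
    using assms unfolding defect_inf_def by (simp only: less_SUP_iff)
  then show ?thesis using that by auto
qed

lemma shortest_factor_without_unioccurrent_pal_suffix:
  assumes "0 < defect_inf u"
  obtains r where "is_factor r u" "r \<noteq> []" "\<not> has_unioccurrent_pal_suffix r"
    and "\<And>t. is_factor t u \<Longrightarrow> t \<noteq> [] \<Longrightarrow> length t < length r \<Longrightarrow>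
      has_unioccurrent_pal_suffix t"
proof -
  let ?bad = "\<lambda>r. is_factor r u \<and> r \<noteq> [] \<and> \<not> has_unioccurrent_pal_suffix r"
  obtain w where "is_factor w u" "0 < defect w"
    using assms by (rule defect_inf_pos_imp_factor)
  then obtain v where "prefix v w" "v \<noteq> []" "\<not> has_unioccurrent_pal_suffix v"
    using defect_pos_imp_prefix by blast
  with \<open>is_factor w u\<close> have "?bad v" by (blast intro: is_factor_sublist prefix_imp_sublist)
  then obtain r where "?bad r" and "\<And>t. ?bad t \<Longrightarrow> length r \<le> length t"
    using ex_has_least_nat[of ?bad v length] by blast
  then show ?thesis using that by (auto simp: not_le[symmetric])
qed

lemma longest_pal_suffix_exists: "\<exists>p. longest_pal_suffix p w"
proof -
  have "palindrome [] \<and> suffix [] w" unfolding palindrome_def by simp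
  moreover have "\<forall>s. palindrome s \<and> suffix s w \<longrightarrow> length s < length w + 1"
    using suffix_length_le by fastforce
  ultimately show ?thesis
    using ex_has_greatest_nat[of "\<lambda>s. palindrome s \<and> suffix s w" "[]" length "length w + 1"]
    unfolding longest_pal_suffix_def by blast
qed

lemma longest_pal_suffix_nonempty:
  assumes "longest_pal_suffix p w" and "w \<noteq> []"
  shows "p \<noteq> []"
proof -
  have "palindrome [last w]" unfolding palindrome_def by simp
  moreover have "suffix [last w] w"
    using assms(2) by (metis append_butlast_last_id suffixI)
  ultimately show ?thesis
    using assms(1) unfolding longest_pal_suffix_def by fastforce
qed

lemma no_unioccurrent_pal_suffix_if_prefix:
  assumes "longest_pal_suffix p w" and "suffix t w" and "prefix p t" and "length p < length t"
  shows "\<not> has_unioccurrent_pal_suffix t"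
  unfolding has_unioccurrent_pal_suffix_def
proof (intro notI, elim exE conjE)
  fix s assume s: "palindrome s" "suffix s t" and unioccurrent: "\<not> sublist s (butlast t)"
  have "suffix s w" using s(2) assms(2) by (rule suffix_order.trans)
  then have "suffix s p"
    using assms(1) s(1) suffix_length_suffix unfolding longest_pal_suffix_def by blast
  moreover have "rev s = s" and "rev p = p"
    using s(1) assms(1) unfolding longest_pal_suffix_def palindrome_def by auto
  ultimately have "prefix s p" by (simp add: suffix_to_prefix)
  then have "prefix s t" using assms(3) by (rule prefix_order.trans)
  moreover have "length s < length t"
    using \<open>prefix s p\<close> assms(4) prefix_length_le by fastforce
  ultimately have "prefix s (butlast t)"
    by (auto simp: prefix_def butlast_append)
  then show False using unioccurrent by (simp add: prefix_imp_sublist)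
qed

lemma longest_pal_suffix_no_inner_occurrence:
  assumes "longest_pal_suffix p r"
    and proper: "\<And>t. sublist t r \<Longrightarrow> t \<noteq> [] \<Longrightarrow> length t < length r \<Longrightarrow>
      has_unioccurrent_pal_suffix t"
    and "r = xs @ p @ ys"
  shows "xs = [] \<or> ys = []"
proof (rule ccontr)
  assume "\<not> (xs = [] \<or> ys = [])"
  then have "xs \<noteq> []" "ys \<noteq> []" by auto
  have "\<not> has_unioccurrent_pal_suffix (p @ ys)"
    using assms(1) by (rule no_unioccurrent_pal_suffix_if_prefix)
      (use assms(3) \<open>ys \<noteq> []\<close> in \<open>auto simp: suffix_def\<close>)
  moreover have "has_unioccurrent_pal_suffix (p @ ys)"
    using assms(3) \<open>xs \<noteq> []\<close> \<open>ys \<noteq> []\<close> by (intro proper) auto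
  ultimately show False by contradiction
qed

lemma longest_pal_suffix_prefix:
  assumes "longest_pal_suffix p r" and "\<not> has_unioccurrent_pal_suffix r" and "r \<noteq> []"
    and no_inner: "\<And>xs ys. r = xs @ p @ ys \<Longrightarrow> xs = [] \<or> ys = []"
  shows "prefix p r" and "length p < length r"
proof -
  have "sublist p (butlast r)"
    using assms(1,2) unfolding has_unioccurrent_pal_suffix_def longest_pal_suffix_def by blast
  then obtain xs zs where "butlast r = xs @ p @ zs" unfolding sublist_def by blast
  moreover have "r = butlast r @ [last r]" using assms(3) by simp
  ultimately obtain ys where r: "r = xs @ p @ ys" and "ys \<noteq> []"
    by (metis append.assoc snoc_eq_iff_butlast)
  then have "xs = []" using no_inner by blast
  with r \<open>ys \<noteq> []\<close> show "prefix p r" and "length p < length r" by auto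
qed

lemma first_mismatch_exists:
  assumes "\<not> palindrome r"
  obtains k where "k < length r" "take k (rev r) = take k r" "rev r ! k \<noteq> r ! k"
proof -
  let ?mismatch = "\<lambda>i. i < length r \<and> rev r ! i \<noteq> r ! i"
  have "\<exists>i. ?mismatch i"
    using assms nth_equalityI[of "rev r" r] unfolding palindrome_def by auto
  define k where "k = (LEAST i. ?mismatch i)"
  have k: "?mismatch k"
    unfolding k_def using \<open>\<exists>i. ?mismatch i\<close> by (rule LeastI_ex)
  have below: "\<not> ?mismatch i" if "i < k" for i
    using that unfolding k_def by (rule not_less_Least)
  have "take k (rev r) = take k r"
    by (rule nth_equalityI) (use k below in auto)
  with k that show ?thesis by blast
qed

locale return_word =
  fixes r p :: "nat list" and k :: nat
  assumes binary: "set r \<subseteq> {0, 1}"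
    and p_palindrome: "palindrome p" and p_nonempty: "p \<noteq> []"
    and p_prefix: "prefix p r" and p_suffix: "suffix p r"
    and p_no_inner: "\<And>xs ys. r = xs @ p @ ys \<Longrightarrow> xs = [] \<or> ys = []"
    and p_shorter: "length p < length r"
    and k_less: "k < length r"
    and take_k_rev: "take k (rev r) = take k r"
    and mismatch: "rev r ! k \<noteq> r ! k"
begin

abbreviation "L \<equiv> length r"
abbreviation "P \<equiv> length p"

lemma nth_le_1: "i < L \<Longrightarrow> r!i \<le> 1"
  using binary nth_mem by fastforce

lemma nth_prefix: "l < P \<Longrightarrow> r!l = p!l"
  using p_prefix by (auto simp: prefix_def nth_append)

lemma nth_suffix: "l < P \<Longrightarrow> r!(L - P + l) = p!l"
  using suffix_nth[OF p_suffix] by simp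

lemma p_nth_mirror: "l < P \<Longrightarrow> p!l = p!(P - 1 - l)"
  using p_palindrome palindrome_iff_nth by blast

lemma no_inner_occurrence:
  assumes "1 \<le> i" and "i + P < L"
  shows "\<not> (\<forall>l<P. r!(i+l) = p!l)"
proof
  assume "\<forall>l<P. r!(i+l) = p!l"
  then have "r = take i r @ p @ drop (i + P) r"
    using assms by (intro occurrence_split) auto
  then show False
    using p_no_inner[of "take i r" "drop (i + P) r"] assms by auto
qed

lemma nth_mirror_below_k: "i < k \<Longrightarrow> r!(L - 1 - i) = r!i"
proof -
  assume i: "i < k"
  have "take k (rev r) ! i = take k r ! i" using take_k_rev by simp
  then show ?thesis using i k_less by (simp add: rev_nth)
qed

lemma nth_mismatch: "r!(L - 1 - k) \<noteq> r!k"
  using mismatch k_less by (simp add: rev_nth)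

lemma p_length_le_k: "P \<le> k"
proof (rule ccontr)
  assume "\<not> P \<le> k"
  then have kP: "k < P" by simp
  have "r!k = p!k" using nth_prefix kP .
  also have "\<dots> = p!(P - 1 - k)" using p_nth_mirror kP .
  also have "\<dots> = r!(L - P + (P - 1 - k))" by (rule nth_suffix[symmetric]) (use kP in simp)
  also have "L - P + (P - 1 - k) = L - 1 - k" using kP p_shorter by simp
  finally show False using nth_mismatch by simp
qed

lemma k_pos: "1 \<le> k"
  using p_length_le_k p_nonempty by (cases p) auto

lemma k_bound: "2*k + 2 \<le> L"
proof (rule ccontr)
  assume "\<not> 2*k + 2 \<le> L"
  then consider "L - 1 - k < k" | "L - 1 - k = k" by linarith
  then show False
  proof cases
    case 1
    then have "r!(L - 1 - (L - 1 - k)) = r!(L - 1 - k)" by (rule nth_mirror_below_k)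
    then show False using k_less nth_mismatch by simp
  next
    case 2 then show False using nth_mismatch by simp
  qed
qed

definition q where "q = drop 1 (take k r)"

lemma length_q: "length q = k - 1"
  unfolding q_def using k_less by simp

lemma nth_q: "l < k - 1 \<Longrightarrow> q!l = r!(1+l)"
  unfolding q_def using k_less by simp

lemma take_Suc_k: "take (Suc k) r = [r!0] @ q @ [r!k]"
proof -
  have "take k r = take 1 (take k r) @ q"
    unfolding q_def by (rule append_take_drop_id[symmetric])
  also have "take 1 (take k r) = [r!0]"
    using k_pos k_less by (cases r) (auto simp: take_Suc_conv_app_nth)
  finally show ?thesis using k_less by (simp add: take_Suc_conv_app_nth)
qed

lemma q_palindrome_mirror:
  assumes "palindrome q" and "l < k - 1"
  shows "r!(1+l) = r!(k - 1 - l)"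
proof -
  have "r!(1+l) = q!l" using nth_q assms(2) by simp
  also have "\<dots> = q!(k - 1 - 1 - l)" using assms palindrome_iff_nth length_q by metis
  also have "\<dots> = r!(1 + (k - 1 - 1 - l))" using nth_q assms(2) by simp
  also have "1 + (k - 1 - 1 - l) = k - 1 - l" using assms(2) by simp
  finally show ?thesis .
qed

text \<open>If \<open>q\<close> is a palindrome and \<open>r!k = r!0\<close>, then the prefix \<open>r!0 q r!k\<close> of \<open>r\<close> is a
  palindrome and therefore also ends with \<open>p\<close>.\<close>

lemma palindrome_q_imp_last_ne_first:
  assumes q_pal: "palindrome q"
  shows "r!k \<noteq> r!0"
proof
  assume eq: "r!k = r!0"
  define a where "a = k + 1 - P"
  have "\<forall>l<P. r!(a+l) = p!l"
  proof (intro allI impI)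
    fix l assume l: "l < P"
    show "r!(a+l) = p!l"
    proof (cases "l = P - 1")
      case True
      then have "r!(a+l) = r!0" using eq p_length_le_k l unfolding a_def by simp
      also have "\<dots> = p!0" using nth_prefix p_nonempty by simp
      also have "\<dots> = p!(P - 1 - 0)" using p_nth_mirror[of 0] p_nonempty by simp
      finally show ?thesis using True by simp
    next
      case False
      then have l': "l < P - 1" using l by simp
      have "r!(a+l) = r!(1 + (a + l - 1))"
        by (rule arg_cong[where f = "(!) r"]) (use p_length_le_k in \<open>simp add: a_def\<close>)
      also have "\<dots> = r!(k - 1 - (a + l - 1))"
        using q_palindrome_mirror[OF q_pal] l' p_length_le_k unfolding a_def by simp
      also have "k - 1 - (a + l - 1) = P - 1 - l" unfolding a_def using p_length_le_k l' by simp
      also have "r!(P - 1 - l) = p!(P - 1 - l)" using nth_prefix l by simp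
      also have "\<dots> = p!l" using p_nth_mirror[OF l] by simp
      finally show ?thesis .
    qed
  qed
  moreover have "1 \<le> a" and "a + P < L" unfolding a_def using p_length_le_k k_bound by simp_all
  ultimately show False using no_inner_occurrence by blast
qed

lemma palindrome_q_imp_mirror_ne_first:
  assumes q_pal: "palindrome q"
  shows "r!(L - 1 - k) \<noteq> r!0"
proof
  assume eq: "r!(L - 1 - k) = r!0"
  define b where "b = L - 1 - k"
  have "\<forall>l<P. r!(b+l) = p!l"
  proof (intro allI impI)
    fix l assume l: "l < P"
    show "r!(b+l) = p!l"
    proof (cases "l = 0")
      case True
      then show ?thesis using eq nth_prefix p_nonempty unfolding b_def by simp
    next
      case False
      have "b + l = L - 1 - (k - l)" unfolding b_def using p_length_le_k k_bound l False by simp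
      then have "r!(b+l) = r!(k - l)" using nth_mirror_below_k False k_pos by simp
      also have "k - l = 1 + (k - l - 1)" using p_length_le_k l by linarith
      also have "r!\<dots> = r!(k - 1 - (k - l - 1))"
        using q_palindrome_mirror[OF q_pal, of "k - l - 1"] p_length_le_k l False by linarith
      also have "k - 1 - (k - l - 1) = l" using p_length_le_k l False by simp
      also have "r!l = p!l" using nth_prefix l by simp
      finally show ?thesis .
    qed
  qed
  moreover have "1 \<le> b" and "b + P < L" unfolding b_def using p_length_le_k k_bound by simp_all
  ultimately show False using no_inner_occurrence by blast
qed

lemma q_not_palindrome: "\<not> palindrome q"
proof
  assume "palindrome q"
  then have "r!k \<noteq> r!0" and "r!(L - 1 - k) \<noteq> r!0"
    by (rule palindrome_q_imp_last_ne_first, rule palindrome_q_imp_mirror_ne_first)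
  moreover have "r!0 \<le> 1" and "r!k \<le> 1" and "r!(L - 1 - k) \<le> 1"
    by (rule nth_le_1, use k_less in linarith)+
  ultimately show False using nth_mismatch by linarith
qed

end

locale minimal_return_word = return_word +
  assumes proper_factor_unioccurrent:
    "\<And>t. sublist t r \<Longrightarrow> t \<noteq> [] \<Longrightarrow> length t < length r \<Longrightarrow>
      has_unioccurrent_pal_suffix t"
begin

definition q_occurs_at :: "nat \<Rightarrow> bool" where
  "q_occurs_at j \<longleftrightarrow> 1 \<le> j \<and> j + k + 1 \<le> L \<and> (\<forall>l<k-1. r!(j+l) = r!(1+l))"

lemma last_q_occurrence:
  obtains j where "q_occurs_at j" and "\<And>j'. q_occurs_at j' \<Longrightarrow> j' \<le> j"
proof -
  have "finite (Collect q_occurs_at)"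
    by (rule finite_subset[of _ "{..L}"]) (auto simp: q_occurs_at_def)
  moreover have "q_occurs_at 1"
    unfolding q_occurs_at_def using k_bound k_pos by auto
  ultimately show ?thesis
    using that Max_in[of "Collect q_occurs_at"] Max_ge[of "Collect q_occurs_at"] by blast
qed

lemma sublist_around_q_occurrence:
  assumes "q_occurs_at j"
  shows "sublist ([r!(j-1)] @ q @ [r!(j+k-1)]) r"
proof -
  have j: "1 \<le> j" "j + k + 1 \<le> L" using assms unfolding q_occurs_at_def by auto
  have "take (k-1) (drop j r) = q"
    by (rule nth_equalityI) (use assms in \<open>auto simp: q_occurs_at_def length_q nth_q\<close>)
  moreover have "drop (k-1) (drop j r) = r!(j+k-1) # drop (Suc (j+k-1)) r"
  proof -
    have "drop (k-1) (drop j r) = drop (j+k-1) r" using k_pos by (simp add: add.commute)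
    also have "\<dots> = r!(j+k-1) # drop (Suc (j+k-1)) r"
      by (rule Cons_nth_drop_Suc[symmetric]) (use j in simp)
    finally show ?thesis .
  qed
  moreover have "Suc (j+k-1) = j + k" using k_pos by simp
  ultimately have "drop j r = q @ [r!(j+k-1)] @ drop (j+k) r"
    using append_take_drop_id[of "k-1" "drop j r"] by simp
  moreover have "drop (j-1) r = r!(j-1) # drop (Suc (j-1)) r"
    by (rule Cons_nth_drop_Suc[symmetric]) (use j in simp)
  ultimately have "drop (j-1) r = ([r!(j-1)] @ q @ [r!(j+k-1)]) @ drop (j+k) r"
    using j by simp
  then have "prefix ([r!(j-1)] @ q @ [r!(j+k-1)]) (drop (j-1) r)" by simp
  then show ?thesis
    using sublist_drop prefix_imp_sublist sublist_order.dual_order.trans by blast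
qed

lemma nth_pal_suffix_of_butlast:
  assumes "palindrome s" and "suffix s (butlast r)" and "i < length s" and "i + 1 < k"
  shows "s!i = r!(1+i)"
proof -
  have S: "length s \<le> L - 1" using suffix_length_le[OF assms(2)] by simp
  have "s!i = s!(length s - 1 - i)" using assms(1,3) palindrome_iff_nth by blast
  also have "\<dots> = butlast r ! (L - 1 - length s + (length s - 1 - i))"
    using suffix_nth[OF assms(2)] assms(3) by simp
  also have "L - 1 - length s + (length s - 1 - i) = L - 1 - (i + 1)" using S assms(3) by arith
  also have "butlast r ! (L - 1 - (i + 1)) = r!(L - 1 - (i + 1))"
    using assms(4) k_less by (simp add: nth_butlast)
  also have "\<dots> = r!(i + 1)" using nth_mirror_below_k assms(4) by blast
  finally show ?thesis by simp
qed

lemma q_occurs_at_pal_suffix_of_butlast: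
  assumes "palindrome s" and "suffix s (butlast r)" and "k \<le> length s" and "length s < L - 1"
  shows "q_occurs_at (L - 1 - length s)"
  unfolding q_occurs_at_def
proof (intro conjI allI impI)
  show "1 \<le> L - 1 - length s" and "L - 1 - length s + k + 1 \<le> L" using assms(3,4) by auto
  fix l assume l: "l < k - 1"
  have "r!(L - 1 - length s + l) = butlast r ! (L - 1 - length s + l)"
    using assms(3,4) l by (simp add: nth_butlast)
  also have "\<dots> = s!l" using suffix_nth[OF assms(2), of l] assms(3) l by simp
  also have "\<dots> = r!(1+l)" using nth_pal_suffix_of_butlast assms(1,2,3) l by simp
  finally show "r!(L - 1 - length s + l) = r!(1+l)" .
qed

text \<open>Minimality of \<open>r\<close> enters here. The segment \<open>t\<close> of \<open>butlast r\<close> starting at the last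
  occurrence of \<open>q\<close> has a unioccurrent palindromic suffix \<open>s\<close>, which like every palindromic
  suffix of \<open>butlast r\<close> starts like \<open>q\<close>. A proper \<open>s\<close> shorter than \<open>q\<close> would recur at the
  start of \<open>t\<close>, a longer one would be a later occurrence of \<open>q\<close>; hence \<open>s = t\<close>.\<close>

lemma palindrome_after_last_q_occurrence:
  assumes j: "q_occurs_at j" and last: "\<And>j'. q_occurs_at j' \<Longrightarrow> j' \<le> j"
  shows "palindrome (drop j (butlast r))"
proof -
  define t where "t = drop j (butlast r)"
  have j_bounds: "1 \<le> j" "j + k + 1 \<le> L" using j unfolding q_occurs_at_def by auto
  have length_t: "length t = L - 1 - j" unfolding t_def by simp
  have nth_t: "t!i = r!(j+i)" if "i < length t" for i
    using that unfolding t_def by (simp add: nth_butlast)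
  have "has_unioccurrent_pal_suffix t"
  proof (rule proper_factor_unioccurrent)
    show "sublist t r"
      unfolding t_def using sublist_butlast sublist_drop sublist_order.order_trans by blast
    show "t \<noteq> []" and "length t < L" using length_t j_bounds k_pos by auto
  qed
  then obtain s where s: "palindrome s" "suffix s t" and unioccurrent: "\<not> sublist s (butlast t)"
    unfolding has_unioccurrent_pal_suffix_def by blast
  have s_suffix: "suffix s (butlast r)"
    using s(2) suffix_drop suffix_order.trans unfolding t_def by blast
  have "\<not> length s < length t"
  proof
    assume short: "length s < length t"
    show False
    proof (cases "k \<le> length s")
      case True
      have "q_occurs_at (L - 1 - length s)"
        by (rule q_occurs_at_pal_suffix_of_butlast) (use s s_suffix True short length_t in auto)
      then show False using last short length_t by fastforce
    next
      case False
      have "s!i = t!i" if "i < length s" for i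
      proof -
        have "s!i = r!(1+i)" using nth_pal_suffix_of_butlast s(1) s_suffix that False by simp
        also have "\<dots> = r!(j+i)" using j that False unfolding q_occurs_at_def by simp
        also have "\<dots> = t!i" using nth_t that short by simp
        finally show ?thesis .
      qed
      then have "sublist s (butlast t)"
        by (intro sublist_at_nthI[of 0]) (use short in \<open>auto simp: nth_butlast\<close>)
      then show False using unioccurrent by contradiction
    qed
  qed
  then have "s = t" using s(2) by (auto simp: suffix_def)
  then show ?thesis using s(1) t_def by simp
qed

lemma letter_after_last_q_occurrence:
  assumes "q_occurs_at j" and "\<And>j'. q_occurs_at j' \<Longrightarrow> j' \<le> j"
  shows "r!(j+k-1) = r!(L - 1 - k)"
proof -
  let ?t = "drop j (butlast r)"
  have bounds: "1 \<le> j" "j + k + 1 \<le> L" using assms(1) unfolding q_occurs_at_def by auto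
  then have "k - 1 < length ?t" using k_pos by simp
  then have "?t!(k-1) = ?t!(length ?t - 1 - (k-1))"
    using palindrome_after_last_q_occurrence[OF assms] palindrome_iff_nth by blast
  moreover have "j + (L - 1 - j - 1 - (k - 1)) = L - 1 - k" using bounds k_pos by simp
  ultimately show ?thesis using bounds k_pos by (simp add: nth_butlast)
qed

lemma letter_before_q_occurrence:
  assumes "q_occurs_at j" and "2 \<le> j"
  shows "r!(j-1) \<noteq> r!0"
proof
  assume eq: "r!(j-1) = r!0"
  have "r!(j - 1 + l) = p!l" if l: "l < P" for l
  proof (cases "l = 0")
    case True then show ?thesis using eq nth_prefix p_nonempty by simp
  next
    case False
    have "r!(j - 1 + l) = r!(j + (l - 1))" using False assms(2) by (simp add: algebra_simps)
    also have "\<dots> = r!(1 + (l - 1))"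
    proof -
      have "l - 1 < k - 1" using l False p_length_le_k by linarith
      then show ?thesis using assms(1) unfolding q_occurs_at_def by blast
    qed
    also have "\<dots> = p!l" using nth_prefix l False by simp
    finally show ?thesis .
  qed
  moreover have "1 \<le> j - 1" and "j - 1 + P < L"
    using assms p_length_le_k unfolding q_occurs_at_def by auto
  ultimately show False using no_inner_occurrence by blast
qed

lemma sublist_compl_first_q_rev_k: "sublist ([1 - r!0] @ q @ [rev r ! k]) r"
proof -
  obtain j where j: "q_occurs_at j" and last: "\<And>j'. q_occurs_at j' \<Longrightarrow> j' \<le> j"
    using last_q_occurrence by blast
  have after: "r!(j+k-1) = r!(L - 1 - k)" using j last by (rule letter_after_last_q_occurrence)
  have bounds: "1 \<le> j" "j + k + 1 \<le> L" using j unfolding q_occurs_at_def by auto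
  moreover have "j \<noteq> 1" using after nth_mismatch by auto
  ultimately have "r!(j-1) \<noteq> r!0" using j letter_before_q_occurrence by simp
  moreover have "r!(j-1) \<le> 1" and "r!0 \<le> 1"
    by (rule nth_le_1, use bounds in linarith)+
  ultimately have "r!(j-1) = 1 - r!0" by linarith
  moreover have "rev r ! k = r!(L - 1 - k)" using k_less by (simp add: rev_nth)
  ultimately show ?thesis using sublist_around_q_occurrence[OF j] after by simp
qed

end

lemma return_word_rev:
  assumes "return_word r p k"
  shows "return_word (rev r) p k"
proof -
  interpret return_word r p k by (fact assms)
  show ?thesis
  proof
    show "set (rev r) \<subseteq> {0, 1}" using binary by simp
    show "palindrome p" and "p \<noteq> []" by (fact p_palindrome, fact p_nonempty)
    show "prefix p (rev r)" and "suffix p (rev r)"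
      using p_prefix p_suffix p_palindrome by (simp_all add: suffix_to_prefix palindrome_def)
    show "xs = [] \<or> ys = []" if "rev r = xs @ p @ ys" for xs ys
    proof -
      have "r = rev ys @ p @ rev xs"
        using that p_palindrome unfolding palindrome_def
        by (metis rev_append rev_rev_ident append_assoc)
      then show ?thesis using p_no_inner by blast
    qed
    show "length p < length (rev r)" and "k < length (rev r)" using p_shorter k_less by simp_all
    show "take k (rev (rev r)) = take k (rev r)" using take_k_rev by simp
    show "rev (rev r) ! k \<noteq> rev r ! k" using mismatch by simp
  qed
qed

lemma (in minimal_return_word) binary_extensions_of_q:
  assumes "minimal_return_word (rev r) p k" and "x \<le> 1" and "y \<le> 1"
  shows "sublist ([x] @ q @ [y]) r \<or> sublist ([x] @ q @ [y]) (rev r)"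
proof -
  interpret R: minimal_return_word "rev r" p k by (fact assms(1))
  have same_q: "R.q = q" unfolding q_def R.q_def using take_k_rev by simp
  have "take k (rev r) ! 0 = take k r ! 0" using take_k_rev by simp
  then have same_first: "rev r ! 0 = r ! 0" using k_pos by simp
  have "0 < L" using k_less by linarith
  then have "r!0 \<le> 1" "r!k \<le> 1" "rev r ! k \<le> 1" using nth_le_1 R.nth_le_1 k_less by simp_all
  then have "x = r!0 \<or> x = 1 - r!0" and "y = r!k \<or> y = rev r ! k"
    using assms(2,3) mismatch by linarith+
  moreover have "sublist ([r!0] @ q @ [r!k]) r"
    using take_Suc_k sublist_take by metis
  moreover have "sublist ([r!0] @ q @ [rev r ! k]) (rev r)"
    using R.take_Suc_k sublist_take same_q same_first by metis
  moreover note sublist_compl_first_q_rev_k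
  moreover have "sublist ([1 - r!0] @ q @ [r ! k]) (rev r)"
    using R.sublist_compl_first_q_rev_k same_q same_first by simp
  ultimately show ?thesis by blast
qed

lemma minimal_return_word_exists:
  assumes "set r \<subseteq> {0, 1}" and "r \<noteq> []" and "\<not> has_unioccurrent_pal_suffix r"
    and proper: "\<And>t. sublist t r \<Longrightarrow> t \<noteq> [] \<Longrightarrow> length t < length r \<Longrightarrow>
      has_unioccurrent_pal_suffix t"
  obtains p k where "minimal_return_word r p k"
proof -
  obtain p where p: "longest_pal_suffix p r" using longest_pal_suffix_exists by blast
  have no_inner: "xs = [] \<or> ys = []" if "r = xs @ p @ ys" for xs ys
    using p proper that by (rule longest_pal_suffix_no_inner_occurrence)
  have "prefix p r" and "length p < length r"
    using longest_pal_suffix_prefix[OF p assms(3,2)] no_inner by blast+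
  have "\<not> palindrome r"
  proof
    assume "palindrome r"
    then have "length r \<le> length p"
      using p suffix_order.refl unfolding longest_pal_suffix_def by blast
    with \<open>length p < length r\<close> show False by simp
  qed
  then obtain k where k: "k < length r" "take k (rev r) = take k r" "rev r ! k \<noteq> r ! k"
    by (rule first_mismatch_exists)
  have "minimal_return_word r p k"
  proof (unfold_locales)
    show "palindrome p" and "suffix p r" using p unfolding longest_pal_suffix_def by blast+
    show "p \<noteq> []" using p assms(2) by (rule longest_pal_suffix_nonempty)
  qed (use assms(1) k \<open>prefix p r\<close> \<open>length p < length r\<close> no_inner proper in blast)+
  then show ?thesis by (rule that)
qed

lemma shortest_factor_minimal_return_word:
  assumes binary: "\<forall>n. u n \<in> {0, 1}" and closed: "closed_under_reversal u"
    and r: "is_factor r u" "r \<noteq> []" "\<not> has_unioccurrent_pal_suffix r"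
    and shortest: "\<And>t. is_factor t u \<Longrightarrow> t \<noteq> [] \<Longrightarrow> length t < length r \<Longrightarrow>
      has_unioccurrent_pal_suffix t"
  obtains p k where "minimal_return_word r p k" and "minimal_return_word (rev r) p k"
proof -
  have rev_r: "is_factor (rev r) u" using closed r(1) unfolding closed_under_reversal_def by blast
  have proper: "has_unioccurrent_pal_suffix t"
    if "is_factor w u" "length w = length r" "sublist t w" "t \<noteq> []" "length t < length w" for t w
    using shortest is_factor_sublist that by auto
  have "range u \<subseteq> {0, 1}" using binary by (simp add: image_subset_iff)
  with set_factor_subset[OF r(1)] have "set r \<subseteq> {0, 1}" by (rule order_trans)
  then obtain p k where R: "minimal_return_word r p k"
    using r(2,3) proper[OF r(1)] minimal_return_word_exists by blast
  have "return_word (rev r) p k"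
    using R minimal_return_word.axioms(1) return_word_rev by blast
  then have "minimal_return_word (rev r) p k"
    using proper[OF rev_r]
    by (intro minimal_return_word.intro minimal_return_word_axioms.intro) simp_all
  with R show ?thesis by (rule that)
qed

theorem lemma23:
  fixes u :: "nat \<Rightarrow> nat"
  assumes "\<forall>n. u n \<in> {0, 1}"
    and "closed_under_reversal u"
    and "defect_inf u > 0"
  shows "\<exists>q. is_factor q u \<and> \<not> palindrome q \<and>
           is_factor ([0] @ q @ [0]) u \<and> is_factor ([0] @ q @ [1]) u \<and>
           is_factor ([1] @ q @ [0]) u \<and> is_factor ([1] @ q @ [1]) u"
proof -
  obtain r where r: "is_factor r u" "r \<noteq> []" "\<not> has_unioccurrent_pal_suffix r"
    and shortest: "\<And>t. is_factor t u \<Longrightarrow> t \<noteq> [] \<Longrightarrow> length t < length r \<Longrightarrow>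
      has_unioccurrent_pal_suffix t"
    using shortest_factor_without_unioccurrent_pal_suffix[OF assms(3)] by blast
  obtain p k where "minimal_return_word r p k" and "minimal_return_word (rev r) p k"
    using shortest_factor_minimal_return_word[OF assms(1,2) r shortest] by blast
  interpret minimal_return_word r p k by fact
  have rev_r: "is_factor (rev r) u" using assms(2) r(1) unfolding closed_under_reversal_def by blast
  have extension: "is_factor ([x] @ q @ [y]) u" if "x \<le> 1" "y \<le> 1" for x y
    using binary_extensions_of_q[OF \<open>minimal_return_word (rev r) p k\<close> that]
      is_factor_sublist[OF r(1)] is_factor_sublist[OF rev_r] by blast
  have "sublist q ([0] @ q @ [0])" unfolding sublist_def by blast
  then have "is_factor q u" using extension[of 0 0] by (rule is_factor_sublist[rotated]) simp_all
  with extension show ?thesis using q_not_palindrome by blast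
qed

end
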